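(* Let $f\in M_k(\Gamma)$ and $g\in M_l(\Gamma)$ be nonzero cusp forms and $r,s\ge0$, such that $\delta_k^{(r)}(f)$ and $\delta_l^{(s)}(g)$ are both eigenforms. Then $\delta_k^{(r)}(f)\,\delta_l^{(s)}(g)$ is not an eigenform.
   Context: $\Gamma=SL_2(\mathbb Z)$; $M_k(\Gamma)$ is the space of holomorphic modular forms of even weight $k$. The Maass–Shimura operator is $\delta_k(F)(z)=\frac{1}{2\pi i}\left(\frac{k}{2i\,\mathrm{Im}(z)}F(z)+\frac{\partial F}{\partial z}(z)\right)$, $\delta_k^{(r)}=\delta_{k+2r-2}\circ\cdots\circ\delta_k$, $\delta_k^{(0)}=\mathrm{id}$. The Hecke operator in weight $k$ is $(T_nF)(z)=n^{k-1}\sum_{d\mid n}d^{-k}\sum_{b=0}^{d-1}F\left(\frac{nz+bd}{d^2}\right)$, and an eigenform is a nonzero (nearly holomorphic) form that is an eigenvector of every $T_n$, $n\ge1$. *)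

theory Defs
  imports "HOL-Analysis.Analysis"
begin

definition upper_half :: "complex set" where
  "upper_half = {z. Im z > 0}"

text \<open>Holomorphic modular forms of weight k for SL2(Z): holomorphic on the upper half plane,
  weight-k invariant under every matrix (a b; c d) in SL2(Z), with a q-expansion
  sum over n \<ge> 0 of a_n q^n, q = exp(2 pi i z) (holomorphy at the cusp).\<close>
definition q_expansion :: "(nat \<Rightarrow> complex) \<Rightarrow> (complex \<Rightarrow> complex) \<Rightarrow> bool" where
  "q_expansion a f \<longleftrightarrow>
     (\<forall>z\<in>upper_half. (\<lambda>n. a n * exp (2 * complex_of_real pi * \<i> * of_nat n * z)) sums f z)"

definition modular_form :: "int \<Rightarrow> (complex \<Rightarrow> complex) \<Rightarrow> bool" where
  "modular_form k f \<longleftrightarrow>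
     f holomorphic_on upper_half \<and>
     (\<forall>a b c d :: int. a * d - b * c = 1 \<longrightarrow>
        (\<forall>z\<in>upper_half. f ((of_int a * z + of_int b) / (of_int c * z + of_int d))
                          = (of_int c * z + of_int d) powi k * f z)) \<and>
     (\<exists>a. q_expansion a f)"

definition cusp_form :: "int \<Rightarrow> (complex \<Rightarrow> complex) \<Rightarrow> bool" where
  "cusp_form k f \<longleftrightarrow> modular_form k f \<and> (\<exists>a. q_expansion a f \<and> a 0 = 0)"

definition wirtinger_dz :: "(complex \<Rightarrow> complex) \<Rightarrow> complex \<Rightarrow> complex" where
  "wirtinger_dz F z =
     (vector_derivative (\<lambda>t::real. F (z + of_real t)) (at 0)
      - \<i> * vector_derivative (\<lambda>t::real. F (z + \<i> * of_real t)) (at 0)) / 2"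

definition maass_shimura :: "int \<Rightarrow> (complex \<Rightarrow> complex) \<Rightarrow> complex \<Rightarrow> complex" where
  "maass_shimura k F z =
     (1 / (2 * complex_of_real pi * \<i>)) *
       (of_int k / (2 * \<i> * complex_of_real (Im z)) * F z + wirtinger_dz F z)"

fun maass_shimura_iter :: "int \<Rightarrow> nat \<Rightarrow> (complex \<Rightarrow> complex) \<Rightarrow> complex \<Rightarrow> complex" where
  "maass_shimura_iter k 0 F = F"
| "maass_shimura_iter k (Suc r) F = maass_shimura (k + 2 * int r) (maass_shimura_iter k r F)"

definition hecke :: "int \<Rightarrow> nat \<Rightarrow> (complex \<Rightarrow> complex) \<Rightarrow> complex \<Rightarrow> complex" where
  "hecke k n F z =
     of_nat n powi (k - 1) *
       (\<Sum>d | d dvd n. of_nat d powi (- k) *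
          (\<Sum>b<d. F ((of_nat n * z + of_nat b * of_nat d) / (of_nat d)\<^sup>2)))"

definition eigenform :: "int \<Rightarrow> (complex \<Rightarrow> complex) \<Rightarrow> bool" where
  "eigenform k F \<longleftrightarrow>
     (\<exists>z\<in>upper_half. F z \<noteq> 0) \<and>
     (\<forall>n\<ge>1. \<exists>c::complex. \<forall>z\<in>upper_half. hecke k n F z = c * F z)"

end

theory Submission
  imports Defs "HOL-Complex_Analysis.Conformal_Mappings" "HOL-Computational_Algebra.Polynomial"
begin

text \<open>
  Write \<open>q = e^(2 pi i z)\<close> and \<open>y = Im z\<close>.  A cusp form is a power series in \<open>q\<close> without
  constant term; applying Maass--Shimura operators produces finite sums \<open>sum_j y^(-j) S_j(q)\<close>
  with every \<open>S_j(0) = 0\<close>.  Multiplying two such sums gives \<open>P = sum_i y^(-e_i) S_i(q)\<close> with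
  every \<open>S_i\<close> vanishing to order 2 at \<open>q = 0\<close>.  The Hecke operator \<open>T_n\<close> acts termwise, and
  the coefficient of \<open>q^1\<close> in the transformed series is \<open>n^(e_i)\<close> times the \<open>n\<close>-th coefficient
  of \<open>S_i\<close>.  Expansions of this shape are unique (a power series vanishing on a circle is zero,
  a polynomial in \<open>1/y\<close> vanishing for all \<open>y > 0\<close> is zero), so \<open>T_n P = lambda P\<close> forces all
  coefficients of \<open>P\<close> to vanish, i.e. \<open>P = 0\<close>, contradicting that eigenforms are nonzero.
\<close>

definition qparam :: "complex \<Rightarrow> complex" where
  "qparam z = exp (2 * complex_of_real pi * \<i> * z)"

lemma norm_qparam: "norm (qparam z) = exp (- 2 * pi * Im z)"
  by (simp add: qparam_def)

lemma qparam_in_disc: "z \<in> upper_half \<Longrightarrow> norm (qparam z) < 1"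
  by (simp add: norm_qparam upper_half_def)

lemma qparam_power: "exp (2 * complex_of_real pi * \<i> * of_nat n * z) = qparam z ^ n"
  unfolding qparam_def by (subst exp_of_nat_mult[symmetric]) (simp add: algebra_simps)

lemma qparam_of_nat_mult: "qparam (of_nat m * z) = qparam z ^ m"
  using qparam_power[of m z] by (simp add: qparam_def mult_ac)

lemma qparam_surj:
  assumes "q \<noteq> 0"
  defines "z \<equiv> Ln q / (2 * complex_of_real pi * \<i>)"
  shows "qparam z = q" and "Im z = - ln (norm q) / (2 * pi)"
proof -
  show "qparam z = q" using assms by (simp add: z_def qparam_def exp_Ln)
  have "Im z = - Re (Ln q) / (2 * pi)" by (simp add: z_def Im_divide field_simps power2_eq_square)
  thus "Im z = - ln (norm q) / (2 * pi)" using assms by simp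
qed

text \<open>Power series converging on the unit disc.  Throughout, ``radius at least 1'' is the standing
  hypothesis under which series may be evaluated at \<open>q(z)\<close> and combined.\<close>

lemma lt_unit_radius:
  assumes "norm x < 1" "1 \<le> fps_conv_radius T"
  shows "ereal (norm x) < fps_conv_radius T"
proof -
  have "ereal (norm x) < 1" using assms(1) by simp
  thus ?thesis using assms(2) by (rule less_le_trans)
qed

lemma qparam_lt_radius:
  "z \<in> upper_half \<Longrightarrow> 1 \<le> fps_conv_radius T \<Longrightarrow> ereal (norm (qparam z)) < fps_conv_radius T"
  by (rule lt_unit_radius[OF qparam_in_disc])

lemma fps_unit_radiusI:
  assumes "\<And>r::real. 0 < r \<Longrightarrow> r < 1 \<Longrightarrow> summable (\<lambda>k. fps_nth T k * complex_of_real r ^ k)"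
  shows "1 \<le> fps_conv_radius (T :: complex fps)"
  unfolding fps_conv_radius_def by (rule conv_radius_geI_ex') (use assms in auto)

lemma unit_radius_add:
  "1 \<le> fps_conv_radius (S :: complex fps) \<Longrightarrow> 1 \<le> fps_conv_radius T \<Longrightarrow> 1 \<le> fps_conv_radius (S + T)"
  using fps_conv_radius_add[of S T] by (simp add: min_def split: if_splits)

lemma unit_radius_mult:
  "1 \<le> fps_conv_radius (S :: complex fps) \<Longrightarrow> 1 \<le> fps_conv_radius T \<Longrightarrow> 1 \<le> fps_conv_radius (S * T)"
  using fps_conv_radius_mult[of S T] by (simp add: min_def split: if_splits)

lemma unit_radius_sum:
  "(\<And>a. a \<in> A \<Longrightarrow> 1 \<le> fps_conv_radius (f a :: complex fps)) \<Longrightarrow> 1 \<le> fps_conv_radius (\<Sum>a\<in>A. f a)"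
  by (induction A rule: infinite_finite_induct) (auto intro: unit_radius_add)

lemma eval_fps_sum:
  assumes "\<And>a. a \<in> A \<Longrightarrow> 1 \<le> fps_conv_radius (f a :: complex fps)" and "norm q < 1"
  shows "eval_fps (\<Sum>a\<in>A. f a) q = (\<Sum>a\<in>A. eval_fps (f a) q)"
  using assms(1)
proof (induction A rule: infinite_finite_induct)
  case (insert a A)
  have "eval_fps (f a + (\<Sum>a\<in>A. f a)) q = eval_fps (f a) q + eval_fps (\<Sum>a\<in>A. f a) q"
    using insert.prems by (intro eval_fps_add lt_unit_radius[OF assms(2)] unit_radius_sum) auto
  with insert show ?case by simp
qed auto

lemma eval_fps_cmult:
  "norm q < 1 \<Longrightarrow> 1 \<le> fps_conv_radius (T :: complex fps) \<Longrightarrow> eval_fps (fps_const c * T) q = c * eval_fps T q"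
  by (subst eval_fps_mult) (auto intro: lt_unit_radius)

text \<open>\<open>q d/dq\<close>, the operator by which \<open>d/dz\<close> acts on series in \<open>q(z)\<close>.\<close>

lemma unit_radius_X_deriv:
  "1 \<le> fps_conv_radius (S :: complex fps) \<Longrightarrow> 1 \<le> fps_conv_radius (fps_X * fps_deriv S)"
  using fps_conv_radius_deriv[of S] by (intro unit_radius_mult) auto

lemma eval_fps_X_deriv:
  "norm q < 1 \<Longrightarrow> 1 \<le> fps_conv_radius (S :: complex fps) \<Longrightarrow>
     eval_fps (fps_X * fps_deriv S) q = q * eval_fps (fps_deriv S) q"
  using fps_conv_radius_deriv[of S] by (subst eval_fps_mult) (auto intro: lt_unit_radius)

text \<open>Decimation \<open>sum a_(d m) q^m\<close> and inflation \<open>sum a_m q^(d m)\<close> of a power series: the two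
  operations out of which the Hecke operators act on \<open>q\<close>-expansions.\<close>

lemma sums_supported_on_multiples:
  assumes "m \<ge> 1" and "\<And>k. \<not> m dvd k \<Longrightarrow> g k = 0"
  shows "(\<lambda>k. g (m * k)) sums s \<longleftrightarrow> g sums s"
proof (rule sums_mono_reindex)
  show "strict_mono ((*) m)" using assms(1) by (simp add: strict_mono_def)
  show "g k = 0" if "k \<notin> range ((*) m)" for k
  proof (rule assms(2))
    show "\<not> m dvd k" using that by (auto elim: dvdE)
  qed
qed

definition fps_decimate :: "nat \<Rightarrow> 'a fps \<Rightarrow> 'a fps" where
  "fps_decimate m T = Abs_fps (\<lambda>k. fps_nth T (m * k))"

definition fps_inflate :: "nat \<Rightarrow> 'a::zero fps \<Rightarrow> 'a fps" where
  "fps_inflate m T = Abs_fps (\<lambda>k. if m dvd k then fps_nth T (k div m) else 0)"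

lemma fps_decimate_nth [simp]: "fps_nth (fps_decimate m T) k = fps_nth T (m * k)"
  by (simp add: fps_decimate_def)

lemma fps_inflate_nth [simp]:
  "fps_nth (fps_inflate m T) k = (if m dvd k then fps_nth T (k div m) else 0)"
  by (simp add: fps_inflate_def)

lemma fps_decimate_radius:
  assumes m: "m \<ge> 1" and T: "1 \<le> fps_conv_radius (T :: complex fps)"
  shows "1 \<le> fps_conv_radius (fps_decimate m T)"
proof (rule fps_unit_radiusI)
  fix r :: real assume r: "0 < r" "r < 1"
  define \<rho> where "\<rho> = root m r"
  have \<rho>: "0 < \<rho>" "\<rho> < 1" "\<rho> ^ m = r"
    using r m real_root_less_mono[of m r 1] unfolding \<rho>_def by simp_all
  define g where "g k = norm (fps_nth T k * complex_of_real \<rho> ^ k)" for k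
  have "summable g"
    unfolding g_def by (rule norm_summable_fps, rule lt_unit_radius) (use \<rho> T in auto)
  hence "summable (\<lambda>k. if m dvd k then g k else 0)"
    by (rule summable_comparison_test[rotated]) (auto simp: g_def)
  hence "summable (\<lambda>k. g (m * k))"
    using sums_supported_on_multiples[OF m, of "\<lambda>k. if m dvd k then g k else 0"] by (simp add: summable_def)
  moreover have "g (m * k) = norm (fps_nth (fps_decimate m T) k * complex_of_real r ^ k)" for k
    using \<rho> r by (simp add: g_def norm_mult norm_power power_mult)
  ultimately have "summable (\<lambda>k. norm (fps_nth (fps_decimate m T) k * complex_of_real r ^ k))"
    by simp
  thus "summable (\<lambda>k. fps_nth (fps_decimate m T) k * complex_of_real r ^ k)"
    by (rule summable_norm_cancel)
qed

lemma fps_inflate_radius: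
  assumes m: "m \<ge> 1" and T: "1 \<le> fps_conv_radius (T :: complex fps)"
  shows "1 \<le> fps_conv_radius (fps_inflate m T)"
proof (rule fps_unit_radiusI)
  fix r :: real assume r: "0 < r" "r < 1"
  define g where "g k = fps_nth (fps_inflate m T) k * complex_of_real r ^ k" for k
  have "norm (complex_of_real r ^ m) < 1" using r m by (simp add: norm_power power_less_one_iff)
  hence "summable (\<lambda>k. fps_nth T k * (complex_of_real r ^ m) ^ k)"
    using T by (intro summable_fps lt_unit_radius)
  hence "summable (\<lambda>k. g (m * k))"
    using m by (simp add: g_def power_mult)
  thus "summable g"
    using sums_supported_on_multiples[OF m, of g] by (auto simp: g_def summable_def)
qed

lemma eval_fps_inflate:
  assumes m: "m \<ge> 1" and T: "1 \<le> fps_conv_radius (T :: complex fps)" and q: "norm q < 1"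
  shows "eval_fps (fps_inflate m T) q = eval_fps T (q ^ m)"
proof -
  have "norm (q ^ m) < 1" using q m by (simp add: norm_power power_less_one_iff)
  hence "(\<lambda>k. fps_nth T k * (q ^ m) ^ k) sums eval_fps T (q ^ m)"
    using T by (intro sums_eval_fps lt_unit_radius)
  define g where "g k = fps_nth (fps_inflate m T) k * q ^ k" for k
  have "(\<lambda>k. g (m * k)) sums eval_fps T (q ^ m)"
    using \<open>(\<lambda>k. fps_nth T k * (q ^ m) ^ k) sums _\<close> m by (simp add: g_def power_mult)
  hence "g sums eval_fps T (q ^ m)"
    by (subst (asm) sums_supported_on_multiples[OF m]) (auto simp: g_def)
  hence "suminf g = eval_fps T (q ^ m)" by (rule sums_unique[symmetric])
  thus ?thesis by (simp only: g_def[abs_def] eval_fps_def)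
qed

lemma sum_roots_of_unity:
  assumes d: "d \<ge> 1"
  shows "(\<Sum>b<d. exp (2 * complex_of_real pi * \<i> * of_nat k / of_nat d) ^ b) = (if d dvd k then of_nat d else 0)"
proof -
  define \<omega> where "\<omega> = exp (2 * complex_of_real pi * \<i> * of_nat k / of_nat d)"
  have "\<omega> = 1 \<longleftrightarrow> d dvd k" unfolding \<omega>_def by (rule complex_root_unity_eq_1[OF d])
  moreover have "\<omega> ^ d = 1" unfolding \<omega>_def using complex_root_unity[of d k] d by simp
  ultimately show ?thesis unfolding \<omega>_def[symmetric] sum_gp_strict by auto
qed

lemma sum_translates_eval_fps:
  assumes d: "d \<ge> 1" and X: "X \<in> upper_half" and T: "1 \<le> fps_conv_radius T"
  shows "(\<Sum>b<d. eval_fps T (qparam ((X + of_nat b) / of_nat d))) = of_nat d * eval_fps (fps_decimate d T) (qparam X)"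
proof -
  define w where "w = qparam (X / of_nat d)"
  define \<omega> where "\<omega> k = exp (2 * complex_of_real pi * \<i> * of_nat k / of_nat d)" for k :: nat
  define g where "g k = (if d dvd k then of_nat d * fps_nth T k * w ^ k else 0)" for k
  have XbH: "(X + of_nat b) / of_nat d \<in> upper_half" for b
    using X d by (simp add: upper_half_def Im_divide_of_nat)
  have "qparam ((X + of_nat b) / of_nat d) = w * exp (2 * complex_of_real pi * \<i> * of_nat b / of_nat d)" for b
    by (simp add: w_def qparam_def exp_add[symmetric] add_divide_distrib algebra_simps)
  hence power_translate: "qparam ((X + of_nat b) / of_nat d) ^ k = w ^ k * \<omega> k ^ b" for b k
    by (simp add: power_mult_distrib \<omega>_def exp_of_nat_mult[symmetric] algebra_simps)
  have "(\<lambda>k. \<Sum>b<d. fps_nth T k * qparam ((X + of_nat b) / of_nat d) ^ k)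
          sums (\<Sum>b<d. eval_fps T (qparam ((X + of_nat b) / of_nat d)))"
    by (intro sums_sum sums_eval_fps qparam_lt_radius[OF XbH T])
  moreover have "(\<Sum>b<d. fps_nth T k * qparam ((X + of_nat b) / of_nat d) ^ k) = g k" for k
  proof -
    have "(\<Sum>b<d. fps_nth T k * qparam ((X + of_nat b) / of_nat d) ^ k) = fps_nth T k * w ^ k * (\<Sum>b<d. \<omega> k ^ b)"
      by (simp add: power_translate sum_distrib_left mult.assoc)
    also have "\<dots> = g k"
      unfolding \<omega>_def sum_roots_of_unity[OF d] by (simp add: g_def)
    finally show ?thesis .
  qed
  ultimately have sums_translates: "g sums (\<Sum>b<d. eval_fps T (qparam ((X + of_nat b) / of_nat d)))"
    by simp
  have "w ^ d = qparam X"
    using d by (simp add: w_def qparam_def exp_of_nat_mult[symmetric])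
  hence "(\<lambda>k. g (d * k)) = (\<lambda>k. of_nat d * (fps_nth (fps_decimate d T) k * qparam X ^ k))"
    by (auto simp: g_def power_mult)
  moreover have "(\<lambda>k. of_nat d * (fps_nth (fps_decimate d T) k * qparam X ^ k))
                   sums (of_nat d * eval_fps (fps_decimate d T) (qparam X))"
    by (intro sums_mult sums_eval_fps qparam_lt_radius[OF X fps_decimate_radius[OF d T]])
  ultimately have "(\<lambda>k. g (d * k)) sums (of_nat d * eval_fps (fps_decimate d T) (qparam X))"
    by simp
  hence "g sums (of_nat d * eval_fps (fps_decimate d T) (qparam X))"
    by (subst (asm) sums_supported_on_multiples[OF d]) (auto simp: g_def)
  with sums_translates show ?thesis by (rule sums_unique2)
qed

text \<open>Nearly holomorphic cusp forms are of this shape.\<close>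

definition nh_expansion :: "'i set \<Rightarrow> ('i \<Rightarrow> nat) \<Rightarrow> ('i \<Rightarrow> complex fps) \<Rightarrow> (complex \<Rightarrow> complex) \<Rightarrow> bool" where
  "nh_expansion I e S F \<longleftrightarrow> finite I \<and> (\<forall>i\<in>I. 1 \<le> fps_conv_radius (S i)) \<and>
     (\<forall>z\<in>upper_half. F z = (\<Sum>i\<in>I. complex_of_real (1 / Im z) ^ e i * eval_fps (S i) (qparam z)))"

lemma nh_expansionD:
  assumes "nh_expansion I e S F"
  shows "finite I" and "\<And>i. i \<in> I \<Longrightarrow> 1 \<le> fps_conv_radius (S i)"
    and "\<And>z. z \<in> upper_half \<Longrightarrow> F z = (\<Sum>i\<in>I. complex_of_real (1 / Im z) ^ e i * eval_fps (S i) (qparam z))"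
  using assms by (auto simp: nh_expansion_def)

lemma nh_expansion_diff:
  assumes F: "nh_expansion I e S F" and G: "nh_expansion I e T G"
  shows "nh_expansion I e (\<lambda>i. S i - fps_const a * T i) (\<lambda>z. F z - a * G z)"
  unfolding nh_expansion_def
proof (intro conjI ballI)
  note S = nh_expansionD(2)[OF F] and T = nh_expansionD(2)[OF G]
  show "finite I" by (rule nh_expansionD(1)[OF F])
  show "1 \<le> fps_conv_radius (S i - fps_const a * T i)" if "i \<in> I" for i
    using fps_conv_radius_diff[of "S i" "fps_const a * T i"] S[OF that] unit_radius_mult[OF _ T[OF that], of "fps_const a"]
    by (auto simp: min_def split: if_splits)
  fix z assume z: "z \<in> upper_half"
  define c where "c = complex_of_real (1 / Im z)"
  have eval_diff: "eval_fps (S i - fps_const a * T i) (qparam z) = eval_fps (S i) (qparam z) - a * eval_fps (T i) (qparam z)"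
    if "i \<in> I" for i
  proof -
    have "1 \<le> fps_conv_radius (fps_const a * T i)" using T[OF that] by (intro unit_radius_mult) simp_all
    thus ?thesis using S[OF that] T[OF that] qparam_in_disc[OF z]
      by (subst eval_fps_diff) (auto intro: lt_unit_radius simp: eval_fps_cmult)
  qed
  have "F z - a * G z = (\<Sum>i\<in>I. c ^ e i * eval_fps (S i) (qparam z) - a * (c ^ e i * eval_fps (T i) (qparam z)))"
    by (simp add: nh_expansionD(3)[OF F z] nh_expansionD(3)[OF G z] c_def sum_distrib_left sum_subtractf)
  also have "\<dots> = (\<Sum>i\<in>I. c ^ e i * eval_fps (S i - fps_const a * T i) (qparam z))"
    by (intro sum.cong refl) (simp add: eval_diff algebra_simps)
  finally show "F z - a * G z = (\<Sum>i\<in>I. complex_of_real (1 / Im z) ^ e i * eval_fps (S i - fps_const a * T i) (qparam z))"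
    by (simp add: c_def)
qed

lemma nh_expansion_group:
  assumes F: "nh_expansion I e S F"
  shows "nh_expansion (e ` I) id (\<lambda>j. \<Sum>i\<in>{i\<in>I. e i = j}. S i) F"
  unfolding nh_expansion_def
proof (intro conjI ballI)
  note I = nh_expansionD(1)[OF F] and S = nh_expansionD(2)[OF F]
  show "finite (e ` I)" using I by simp
  show "1 \<le> fps_conv_radius (\<Sum>i\<in>{i\<in>I. e i = j}. S i)" for j
    using S by (intro unit_radius_sum) auto
  fix z assume z: "z \<in> upper_half"
  define c where "c = complex_of_real (1 / Im z)"
  have "F z = (\<Sum>i\<in>I. c ^ e i * eval_fps (S i) (qparam z))"
    using nh_expansionD(3)[OF F z] by (simp add: c_def)
  also have "\<dots> = (\<Sum>j\<in>e ` I. \<Sum>i\<in>{i\<in>I. e i = j}. c ^ e i * eval_fps (S i) (qparam z))"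
    by (rule sum.image_gen[OF I])
  also have "\<dots> = (\<Sum>j\<in>e ` I. c ^ j * (\<Sum>i\<in>{i\<in>I. e i = j}. eval_fps (S i) (qparam z)))"
    by (auto simp: sum_distrib_left intro!: sum.cong)
  also have "\<dots> = (\<Sum>j\<in>e ` I. c ^ id j * eval_fps (\<Sum>i\<in>{i\<in>I. e i = j}. S i) (qparam z))"
    using S by (subst eval_fps_sum[OF _ qparam_in_disc[OF z]]) auto
  finally show "F z = (\<Sum>j\<in>e ` I. complex_of_real (1 / Im z) ^ id j *
      eval_fps (\<Sum>i\<in>{i\<in>I. e i = j}. S i) (qparam z))"
    by (simp add: c_def)
qed

text \<open>Cusp forms and their images under the Maass--Shimura operators: expansions in which every
  \<open>S_j\<close> has vanishing constant term.\<close>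

definition nearly_cuspidal :: "(complex \<Rightarrow> complex) \<Rightarrow> bool" where
  "nearly_cuspidal F \<longleftrightarrow> (\<exists>J S. nh_expansion {..<J} id S F \<and> (\<forall>j. fps_nth (S j) 0 = 0))"

text \<open>A cusp form is its own \<open>q\<close>-expansion; the expansion converges on the whole unit disc
  because every \<open>0 < r < 1\<close> is a value \<open>q(z)\<close>.\<close>

lemma cusp_form_nearly_cuspidal:
  assumes "cusp_form k f"
  shows "nearly_cuspidal f"
proof -
  from assms obtain a where qa: "q_expansion a f" and a0: "a 0 = 0"
    unfolding cusp_form_def by blast
  define S where "S = Abs_fps a"
  have sums: "(\<lambda>n. fps_nth S n * qparam z ^ n) sums f z" if z: "z \<in> upper_half" for z
    using qa z unfolding q_expansion_def by (simp add: S_def qparam_power)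
  have radius: "1 \<le> fps_conv_radius S"
  proof (rule fps_unit_radiusI)
    fix r :: real assume r: "0 < r" "r < 1"
    define z where "z = Ln (complex_of_real r) / (2 * complex_of_real pi * \<i>)"
    have "qparam z = complex_of_real r" "Im z = - ln r / (2 * pi)"
      using qparam_surj[of "complex_of_real r"] r by (simp_all add: z_def)
    moreover have "z \<in> upper_half"
      using r \<open>Im z = - ln r / (2 * pi)\<close> ln_less_zero[of r] by (simp add: upper_half_def divide_neg_pos)
    ultimately show "summable (\<lambda>k. fps_nth S k * complex_of_real r ^ k)"
      using sums sums_summable by metis
  qed
  have "nh_expansion {..<1} id (\<lambda>_. S) f"
    unfolding nh_expansion_def using radius sums by (simp add: eval_fps_def sums_iff)
  moreover have "fps_nth S 0 = 0" using a0 by (simp add: S_def)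
  ultimately show ?thesis unfolding nearly_cuspidal_def by blast
qed

lemma has_field_derivative_eval_qparam:
  assumes "z \<in> upper_half" "1 \<le> fps_conv_radius S"
  shows "((\<lambda>w. eval_fps S (qparam w)) has_field_derivative
           2 * complex_of_real pi * \<i> * qparam z * eval_fps (fps_deriv S) (qparam z)) (at z)"
proof -
  have "(qparam has_field_derivative 2 * complex_of_real pi * \<i> * qparam z) (at z)"
    unfolding qparam_def by (auto intro!: derivative_eq_intros)
  from DERIV_chain2[OF has_field_derivative_eval_fps[OF qparam_lt_radius[OF assms]] this]
  show ?thesis by (simp add: mult_ac)
qed

lemma term_derivative_real_direction:
  assumes z: "z \<in> upper_half" and S: "1 \<le> fps_conv_radius S"
  defines "c \<equiv> complex_of_real (1 / Im z)"
  shows "((\<lambda>t. complex_of_real (1 / Im (z + of_real t)) ^ j * eval_fps S (qparam (z + of_real t)))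
     has_vector_derivative c ^ j * (2 * complex_of_real pi * \<i> * qparam z * eval_fps (fps_deriv S) (qparam z))) (at 0)"
proof -
  have "((\<lambda>w. c ^ j * eval_fps S (qparam (z + w))) has_field_derivative
      c ^ j * (2 * complex_of_real pi * \<i> * qparam z * eval_fps (fps_deriv S) (qparam z))) (at (of_real 0))"
    using DERIV_chain2[OF _ DERIV_add[OF DERIV_const[of z] DERIV_ident], of "\<lambda>w. eval_fps S (qparam w)"]
      has_field_derivative_eval_qparam[OF z S] by (auto intro: DERIV_cmult)
  from has_vector_derivative_real_field[OF this] show ?thesis by (simp add: c_def)
qed

lemma term_derivative_imag_direction:
  assumes z: "z \<in> upper_half" and S: "1 \<le> fps_conv_radius S"
  defines "c \<equiv> complex_of_real (1 / Im z)"
  shows "((\<lambda>t. complex_of_real (1 / Im (z + \<i> * of_real t)) ^ j * eval_fps S (qparam (z + \<i> * of_real t)))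
     has_vector_derivative - of_nat j * c ^ Suc j * eval_fps S (qparam z) +
       c ^ j * (2 * complex_of_real pi * \<i> * qparam z * eval_fps (fps_deriv S) (qparam z)) * \<i>) (at 0)"
proof -
  define y where "y = Im z"
  have y: "y > 0" using z by (simp add: y_def upper_half_def)
  define H' where "H' = 2 * complex_of_real pi * \<i> * qparam z * eval_fps (fps_deriv S) (qparam z)"
  have d_eval: "((\<lambda>w. eval_fps S (qparam (z + \<i> * w))) has_field_derivative H' * \<i>) (at 0)"
    using DERIV_chain2[OF _ DERIV_add[OF DERIV_const[of z] DERIV_cmult[OF DERIV_ident, of \<i>]],
        of "\<lambda>w. eval_fps S (qparam w)"] has_field_derivative_eval_qparam[OF z S]
    by (simp add: H'_def)
  have "((\<lambda>w. 1 / (complex_of_real y + w)) has_field_derivative - 1 / complex_of_real y ^ 2) (at 0)"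
    using y by (auto intro!: derivative_eq_intros simp: field_simps power2_eq_square)
  from DERIV_power[OF this, of j]
  have "((\<lambda>w. (1 / (complex_of_real y + w)) ^ j) has_field_derivative
          of_nat j * (- 1 / complex_of_real y ^ 2 * (1 / (complex_of_real y + 0)) ^ (j - Suc 0))) (at 0)" .
  moreover have "of_nat j * (- 1 / complex_of_real y ^ 2 * (1 / (complex_of_real y + 0)) ^ (j - Suc 0))
                   = - of_nat j * (1 / complex_of_real y) ^ Suc j"
    using y by (cases j) (auto simp: field_simps power2_eq_square)
  ultimately have d_power: "((\<lambda>w. (1 / (complex_of_real y + w)) ^ j) has_field_derivative
                               - of_nat j * (1 / complex_of_real y) ^ Suc j) (at 0)"
    by simp
  have "((\<lambda>w. (1 / (complex_of_real y + w)) ^ j * eval_fps S (qparam (z + \<i> * w))) has_field_derivative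
     - of_nat j * (1 / complex_of_real y) ^ Suc j * eval_fps S (qparam z) + (1 / complex_of_real y) ^ j * (H' * \<i>)) (at (of_real 0))"
    using DERIV_mult[OF d_power d_eval] by (simp add: algebra_simps)
  from has_vector_derivative_real_field[OF this]
  show ?thesis by (simp add: c_def y_def H'_def mult.assoc)
qed

lemma wirtinger_dz_nh_expansion:
  assumes F: "nh_expansion {..<J} id S F" and z: "z \<in> upper_half"
  defines "c \<equiv> complex_of_real (1 / Im z)"
    and "H \<equiv> \<lambda>j. eval_fps (S j) (qparam z)"
    and "H' \<equiv> \<lambda>j. 2 * complex_of_real pi * \<i> * qparam z * eval_fps (fps_deriv (S j)) (qparam z)"
  shows "wirtinger_dz F z = (\<Sum>j<J. c ^ j * H' j + \<i> * of_nat j / 2 * c ^ Suc j * H j)"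
proof -
  note S = nh_expansionD(2)[OF F, simplified]
  define expansion_term where "expansion_term j w = complex_of_real (1 / Im w) ^ j * eval_fps (S j) (qparam w)" for j w
  have F_eq: "F w = (\<Sum>j<J. expansion_term j w)" if "w \<in> upper_half" for w
    using nh_expansionD(3)[OF F that] by (simp add: expansion_term_def)
  have "((\<lambda>t. \<Sum>j<J. expansion_term j (z + of_real t)) has_vector_derivative (\<Sum>j<J. c ^ j * H' j)) (at 0)"
    unfolding expansion_term_def c_def H'_def
    by (intro has_vector_derivative_sum term_derivative_real_direction[OF z S]) simp
  moreover have "(\<lambda>t. F (z + of_real t)) = (\<lambda>t. \<Sum>j<J. expansion_term j (z + of_real t))"
    using z by (intro ext F_eq) (simp add: upper_half_def)
  ultimately have real_dir: "vector_derivative (\<lambda>t. F (z + of_real t)) (at 0) = (\<Sum>j<J. c ^ j * H' j)"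
    by (simp add: vector_derivative_at)
  have "((\<lambda>t. \<Sum>j<J. expansion_term j (z + \<i> * of_real t)) has_vector_derivative
          (\<Sum>j<J. - of_nat j * c ^ Suc j * H j + c ^ j * H' j * \<i>)) (at 0)"
    unfolding expansion_term_def c_def H_def H'_def
    by (intro has_vector_derivative_sum term_derivative_imag_direction[OF z S]) simp
  hence "((\<lambda>t. F (z + \<i> * of_real t)) has_vector_derivative
          (\<Sum>j<J. - of_nat j * c ^ Suc j * H j + c ^ j * H' j * \<i>)) (at 0)"
  proof (rule has_vector_derivative_transform_within_open[where S = "{t. - Im z < t}"])
    show "open {t. - Im z < t}" by (simp add: open_Collect_less)
    show "(0::real) \<in> {t. - Im z < t}" using z by (simp add: upper_half_def)
  qed (simp add: F_eq upper_half_def)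
  hence imag_dir: "vector_derivative (\<lambda>t. F (z + \<i> * of_real t)) (at 0) =
      (\<Sum>j<J. - of_nat j * c ^ Suc j * H j + c ^ j * H' j * \<i>)"
    by (simp add: vector_derivative_at)
  have "wirtinger_dz F z = (\<Sum>j<J. c ^ j * H' j - \<i> * (- of_nat j * c ^ Suc j * H j + c ^ j * H' j * \<i>)) / 2"
    unfolding wirtinger_dz_def real_dir imag_dir by (simp only: sum_subtractf sum_distrib_left)
  also have "\<dots> = (\<Sum>j<J. c ^ j * H' j + \<i> * of_nat j / 2 * c ^ Suc j * H j)"
    unfolding sum_divide_distrib by (intro sum.cong refl) (simp add: field_simps)
  finally show ?thesis .
qed

text \<open>Maass--Shimura operators preserve the class: \<open>delta_k\<close> sends \<open>y^(-j) S(q)\<close> to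
  \<open>y^(-j) q S'(q) + w_j y^(-j-1) S(q)\<close> (\<open>w_j = maass_weight k j\<close>), and both series again vanish at \<open>q = 0\<close>.\<close>

definition maass_weight :: "int \<Rightarrow> nat \<Rightarrow> complex" where
  "maass_weight k j = (\<i> * (of_nat j - of_int k) / 2) / (2 * complex_of_real pi * \<i>)"

lemma maass_shimura_nh_expansion:
  assumes F: "nh_expansion {..<J} id S F" and z: "z \<in> upper_half"
  defines "c \<equiv> complex_of_real (1 / Im z)" and "q \<equiv> qparam z"
  shows "maass_shimura k F z = (\<Sum>j<J. c ^ j * (q * eval_fps (fps_deriv (S j)) q) +
                                       maass_weight k j * c ^ Suc j * eval_fps (S j) q)"
proof -
  define H where "H j = eval_fps (S j) q" for j
  define D where "D j = eval_fps (fps_deriv (S j)) q" for j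
  have weight_factor: "of_int k / (2 * \<i> * complex_of_real (Im z)) = - \<i> * of_int k / 2 * c"
    using z by (simp add: c_def field_simps upper_half_def)
  have "maass_shimura k F z = (1 / (2 * complex_of_real pi * \<i>)) *
      (- \<i> * of_int k / 2 * c * (\<Sum>j<J. c ^ j * H j) +
       (\<Sum>j<J. c ^ j * (2 * complex_of_real pi * \<i> * q * D j) + \<i> * of_nat j / 2 * c ^ Suc j * H j))"
    unfolding maass_shimura_def wirtinger_dz_nh_expansion[OF F z] nh_expansionD(3)[OF F z] weight_factor
    by (simp add: c_def q_def H_def D_def)
  also have "\<dots> = (\<Sum>j<J. c ^ j * (q * D j) + maass_weight k j * c ^ Suc j * H j)"
    unfolding sum_distrib_left distrib_left sum.distrib[symmetric]
    by (intro sum.cong refl) (simp add: maass_weight_def field_simps)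
  finally show ?thesis by (simp add: H_def D_def)
qed

lemma maass_shimura_nearly_cuspidal:
  assumes "nearly_cuspidal F"
  shows "nearly_cuspidal (maass_shimura k F)"
proof -
  from assms obtain J S where F: "nh_expansion {..<J} id S F" and S0: "\<And>j. fps_nth (S j) 0 = 0"
    unfolding nearly_cuspidal_def by blast
  note S = nh_expansionD(2)[OF F, simplified]
  define A where "A j = (if j < J then fps_X * fps_deriv (S j) else 0)" for j
  define B where "B j = (if j = 0 then 0 else fps_const (maass_weight k (j - 1)) * S (j - 1))" for j
  have A_radius: "1 \<le> fps_conv_radius (A j)" for j
    using unit_radius_X_deriv[OF S] by (simp add: A_def)
  have B_radius: "1 \<le> fps_conv_radius (B j)" if "j < Suc J" for j
    using S that by (auto simp: B_def intro!: unit_radius_mult)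
  have "nh_expansion {..<Suc J} id (\<lambda>j. A j + B j) (maass_shimura k F)"
    unfolding nh_expansion_def
  proof (intro conjI ballI)
    show "1 \<le> fps_conv_radius (A j + B j)" if "j \<in> {..<Suc J}" for j
      using that by (intro unit_radius_add A_radius B_radius) simp
    fix z assume z: "z \<in> upper_half"
    define c where "c = complex_of_real (1 / Im z)"
    define q where "q = qparam z"
    have q: "norm q < 1" using qparam_in_disc[OF z] by (simp add: q_def)
    have A_sum: "(\<Sum>j<Suc J. c ^ j * eval_fps (A j) q) = (\<Sum>j<J. c ^ j * (q * eval_fps (fps_deriv (S j)) q))"
      by (simp add: A_def) (intro sum.cong refl, simp add: eval_fps_X_deriv[OF q S])
    have B_sum: "(\<Sum>j<Suc J. c ^ j * eval_fps (B j) q) = (\<Sum>j<J. maass_weight k j * c ^ Suc j * eval_fps (S j) q)"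
      by (subst sum.lessThan_Suc_shift, simp add: B_def, intro sum.cong refl) (simp add: eval_fps_cmult[OF q S])
    have "maass_shimura k F z = (\<Sum>j<Suc J. c ^ j * eval_fps (A j) q) + (\<Sum>j<Suc J. c ^ j * eval_fps (B j) q)"
      unfolding maass_shimura_nh_expansion[OF F z] A_sum B_sum by (simp add: c_def q_def sum.distrib)
    also have "\<dots> = (\<Sum>j<Suc J. c ^ j * eval_fps (A j + B j) q)"
      by (simp add: eval_fps_add lt_unit_radius[OF q] A_radius B_radius sum.distrib[symmetric] distrib_left)
    finally show "maass_shimura k F z = (\<Sum>j\<in>{..<Suc J}. complex_of_real (1 / Im z) ^ id j * eval_fps (A j + B j) (qparam z))"
      by (simp add: c_def q_def)
  qed simp
  moreover have "fps_nth (A j + B j) 0 = 0" for j by (simp add: A_def B_def S0)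
  ultimately show ?thesis unfolding nearly_cuspidal_def by blast
qed

lemma maass_shimura_iter_nearly_cuspidal:
  "nearly_cuspidal F \<Longrightarrow> nearly_cuspidal (maass_shimura_iter k r F)"
  by (induction r) (auto intro: maass_shimura_nearly_cuspidal)

text \<open>A product of two such functions has an expansion whose series vanish to order 2 at \<open>q = 0\<close>:
  this is the only property of the product used below.\<close>

lemma nearly_cuspidal_product:
  assumes "nearly_cuspidal F" and "nearly_cuspidal G"
  obtains I :: "(nat \<times> nat) set" and e S where "nh_expansion I e S (\<lambda>z. F z * G z)"
    and "\<And>i. i \<in> I \<Longrightarrow> fps_nth (S i) 0 = 0" and "\<And>i. i \<in> I \<Longrightarrow> fps_nth (S i) 1 = 0"
proof -
  from assms obtain J1 S1 J2 S2 where F: "nh_expansion {..<J1} id S1 F" and S1_0: "\<And>j. fps_nth (S1 j) 0 = 0"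
    and G: "nh_expansion {..<J2} id S2 G" and S2_0: "\<And>j. fps_nth (S2 j) 0 = 0"
    unfolding nearly_cuspidal_def by blast
  note R1 = nh_expansionD(2)[OF F, simplified] and R2 = nh_expansionD(2)[OF G, simplified]
  define I where "I = {..<J1} \<times> {..<J2}"
  define e where "e p = fst p + snd p" for p :: "nat \<times> nat"
  define S where "S p = S1 (fst p) * S2 (snd p)" for p :: "nat \<times> nat"
  have "nh_expansion I e S (\<lambda>z. F z * G z)"
    unfolding nh_expansion_def
  proof (intro conjI ballI)
    show "finite I" by (simp add: I_def)
    show "1 \<le> fps_conv_radius (S p)" if "p \<in> I" for p
      using that by (auto simp: S_def I_def intro!: unit_radius_mult R1 R2)
    fix z assume z: "z \<in> upper_half"
    define c where "c = complex_of_real (1 / Im z)"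
    have eval_S: "eval_fps (S p) (qparam z) = eval_fps (S1 (fst p)) (qparam z) * eval_fps (S2 (snd p)) (qparam z)"
      if "p \<in> I" for p
      using that unfolding S_def I_def
      by (intro eval_fps_mult qparam_lt_radius[OF z] R1 R2) auto
    have "F z * G z = (\<Sum>a<J1. \<Sum>b<J2. (c ^ a * eval_fps (S1 a) (qparam z)) * (c ^ b * eval_fps (S2 b) (qparam z)))"
      by (simp add: nh_expansionD(3)[OF F z] nh_expansionD(3)[OF G z] sum_product c_def)
    also have "\<dots> = (\<Sum>p\<in>I. c ^ e p * eval_fps (S p) (qparam z))"
      unfolding I_def sum.cartesian_product
      by (intro sum.cong refl) (auto simp: eval_S I_def e_def power_add mult_ac)
    finally show "F z * G z = (\<Sum>p\<in>I. complex_of_real (1 / Im z) ^ e p * eval_fps (S p) (qparam z))"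
      by (simp add: c_def)
  qed
  moreover have "fps_nth (S p) 0 = 0" "fps_nth (S p) 1 = 0" for p
    by (simp_all add: S_def fps_mult_nth S1_0 S2_0)
  ultimately show ?thesis using that by blast
qed

text \<open>Hecke operators on expansions.  \<open>T_n\<close> maps \<open>y^(-e) S(q)\<close> to \<open>y^(-e)\<close> times the series
  \<open>hecke_fps K n e S\<close>, whose coefficient of \<open>q^1\<close> is \<open>n^e a_n\<close>.\<close>

definition hecke_weight :: "int \<Rightarrow> nat \<Rightarrow> nat \<Rightarrow> nat \<Rightarrow> complex" where
  "hecke_weight K n e d = of_nat n powi (K - 1) * of_nat d powi (- K) * (of_nat d ^ 2 / of_nat n) ^ e * of_nat d"

definition hecke_fps :: "int \<Rightarrow> nat \<Rightarrow> nat \<Rightarrow> complex fps \<Rightarrow> complex fps" where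
  "hecke_fps K n e T =
     (\<Sum>d | d dvd n. fps_const (hecke_weight K n e d) * fps_inflate (n div d) (fps_decimate d T))"

lemma divisor_ge_1: "n \<ge> 1 \<Longrightarrow> d dvd n \<Longrightarrow> d \<ge> (1::nat)"
  by (cases d) auto

lemma quotient_ge_1: "n \<ge> 1 \<Longrightarrow> d dvd n \<Longrightarrow> n div d \<ge> (1::nat)"
  by (metis div_by_0 dvd_div_eq_0_iff less_one not_le)

lemma hecke_fps_radius:
  assumes n: "n \<ge> 1" and T: "1 \<le> fps_conv_radius T"
  shows "1 \<le> fps_conv_radius (hecke_fps K n e T)"
proof -
  have "1 \<le> fps_conv_radius (fps_inflate (n div d) (fps_decimate d T))" if "d dvd n" for d
    by (intro fps_inflate_radius fps_decimate_radius T quotient_ge_1[OF n that] divisor_ge_1[OF n that])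
  thus ?thesis unfolding hecke_fps_def by (intro unit_radius_sum unit_radius_mult) auto
qed

text \<open>Only the divisor \<open>d = n\<close> contributes to the coefficient of \<open>q^1\<close>.\<close>

lemma hecke_fps_nth_1:
  assumes n: "n \<ge> 1"
  shows "fps_nth (hecke_fps K n e T) 1 = of_nat n ^ e * fps_nth T n"
proof -
  have divisor_term: "hecke_weight K n e d * (if n div d dvd 1 then fps_nth T (d * (1 div (n div d))) else 0)
              = (if d = n then of_nat n ^ e * fps_nth T n else 0)" if "d dvd n" for d
  proof (cases "d = n")
    case True
    have "of_nat n powi (K - 1) * of_nat n powi (- K) = inverse (of_nat n :: complex)"
      using n power_int_add[of "of_nat n :: complex" "K - 1" "- K"] by simp
    hence "hecke_weight K n e d = of_nat n ^ e"
      using n True by (simp add: hecke_weight_def power2_eq_square)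
    moreover have "n div d = 1" using True n by simp
    ultimately show ?thesis using True by simp
  next
    case False
    have "n div d \<noteq> 1"
    proof
      assume "n div d = 1"
      hence "n = d" using dvd_mult_div_cancel[OF that] by simp
      with False show False by simp
    qed
    with False show ?thesis by simp
  qed
  have "fps_nth (hecke_fps K n e T) 1 = (\<Sum>d | d dvd n. if d = n then of_nat n ^ e * fps_nth T n else 0)"
    unfolding hecke_fps_def fps_sum_nth by (intro sum.cong refl)
      (simp only: mem_Collect_eq fps_mult_left_const_nth fps_inflate_nth fps_decimate_nth divisor_term)
  also have "\<dots> = of_nat n ^ e * fps_nth T n"
    using n by (subst sum.delta) (auto intro: finite_divisors_nat)
  finally show ?thesis .
qed

text \<open>The inner sum over \<open>b\<close> for a fixed divisor \<open>d\<close>: the heights scale by \<open>n/d^2\<close> and the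
  root-of-unity filter turns \<open>S\<close> into its decimation, evaluated at \<open>q^(n/d)\<close>.\<close>

lemma hecke_inner_sum:
  assumes P: "nh_expansion I e S P" and n: "n \<ge> 1" and d: "d dvd n" and z: "z \<in> upper_half"
  shows "(\<Sum>b<d. P ((of_nat n * z + of_nat b * of_nat d) / (of_nat d)\<^sup>2)) =
     (\<Sum>i\<in>I. complex_of_real (1 / Im z) ^ e i * ((of_nat d ^ 2 / of_nat n) ^ e i * of_nat d *
        eval_fps (fps_inflate (n div d) (fps_decimate d (S i))) (qparam z)))"
proof -
  have d1: "d \<ge> 1" and m1: "n div d \<ge> 1" using divisor_ge_1[OF n d] quotient_ge_1[OF n d] .
  define c where "c = complex_of_real (1 / Im z)"
  define X where "X = of_nat n * z / of_nat d"
  have X_eq: "X = of_nat (n div d) * z"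
    using d d1 by (auto simp: X_def of_nat_div)
  have XH: "X \<in> upper_half" using z n d1 by (simp add: X_def upper_half_def Im_divide_of_nat)
  have point: "(of_nat n * z + of_nat b * of_nat d) / (of_nat d)\<^sup>2 = (X + of_nat b) / of_nat d" for b
    using d1 by (simp add: X_def field_simps power2_eq_square)
  have pointH: "(X + of_nat b) / of_nat d \<in> upper_half" for b
    using XH d1 by (simp add: upper_half_def Im_divide_of_nat)
  have scale: "complex_of_real (1 / Im ((X + of_nat b) / of_nat d)) = (of_nat d ^ 2 / of_nat n) * c" for b
    using z n d1 by (simp add: c_def X_def Im_divide_of_nat upper_half_def field_simps power2_eq_square)
  have "(\<Sum>b<d. P ((of_nat n * z + of_nat b * of_nat d) / (of_nat d)\<^sup>2)) =
      (\<Sum>b<d. \<Sum>i\<in>I. ((of_nat d ^ 2 / of_nat n) * c) ^ e i * eval_fps (S i) (qparam ((X + of_nat b) / of_nat d)))"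
    by (simp only: point nh_expansionD(3)[OF P pointH] scale)
  also have "\<dots> = (\<Sum>i\<in>I. (of_nat d ^ 2 / of_nat n) ^ e i * c ^ e i *
      (\<Sum>b<d. eval_fps (S i) (qparam ((X + of_nat b) / of_nat d))))"
    by (subst sum.swap) (simp only: power_mult_distrib sum_distrib_left)
  also have "\<dots> = (\<Sum>i\<in>I. c ^ e i * ((of_nat d ^ 2 / of_nat n) ^ e i * of_nat d *
        eval_fps (fps_inflate (n div d) (fps_decimate d (S i))) (qparam z)))"
  proof (rule sum.cong[OF refl])
    fix i assume i: "i \<in> I"
    note T = nh_expansionD(2)[OF P i]
    have "(\<Sum>b<d. eval_fps (S i) (qparam ((X + of_nat b) / of_nat d))) = of_nat d * eval_fps (fps_decimate d (S i)) (qparam X)"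
      by (rule sum_translates_eval_fps[OF d1 XH T])
    also have "\<dots> = of_nat d * eval_fps (fps_inflate (n div d) (fps_decimate d (S i))) (qparam z)"
      by (simp add: X_eq qparam_of_nat_mult eval_fps_inflate[OF m1 fps_decimate_radius[OF d1 T] qparam_in_disc[OF z]])
    finally show "(of_nat d ^ 2 / of_nat n) ^ e i * c ^ e i * (\<Sum>b<d. eval_fps (S i) (qparam ((X + of_nat b) / of_nat d))) =
        c ^ e i * ((of_nat d ^ 2 / of_nat n) ^ e i * of_nat d * eval_fps (fps_inflate (n div d) (fps_decimate d (S i))) (qparam z))"
      by simp
  qed
  finally show ?thesis by (simp add: c_def)
qed

lemma eval_hecke_fps:
  assumes n: "n \<ge> 1" and T: "1 \<le> fps_conv_radius T" and z: "z \<in> upper_half"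
  shows "eval_fps (hecke_fps K n e T) (qparam z) =
    (\<Sum>d | d dvd n. hecke_weight K n e d * eval_fps (fps_inflate (n div d) (fps_decimate d T)) (qparam z))"
proof -
  have radius: "1 \<le> fps_conv_radius (fps_inflate (n div d) (fps_decimate d T))" if "d dvd n" for d
    by (intro fps_inflate_radius fps_decimate_radius T quotient_ge_1[OF n that] divisor_ge_1[OF n that])
  show ?thesis unfolding hecke_fps_def
    using radius qparam_in_disc[OF z]
    by (subst eval_fps_sum) (auto intro!: unit_radius_mult sum.cong eval_fps_cmult)
qed

lemma hecke_nh_expansion:
  assumes P: "nh_expansion I e S P" and n: "n \<ge> 1"
  shows "nh_expansion I e (\<lambda>i. hecke_fps K n (e i) (S i)) (hecke K n P)"
  unfolding nh_expansion_def
proof (intro conjI ballI)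
  show "finite I" by (rule nh_expansionD(1)[OF P])
  show "1 \<le> fps_conv_radius (hecke_fps K n (e i) (S i))" if "i \<in> I" for i
    by (rule hecke_fps_radius[OF n nh_expansionD(2)[OF P that]])
  fix z assume z: "z \<in> upper_half"
  define c where "c = complex_of_real (1 / Im z)"
  define E where "E i d = eval_fps (fps_inflate (n div d) (fps_decimate d (S i))) (qparam z)" for i d
  have "hecke K n P z = of_nat n powi (K - 1) * (\<Sum>d | d dvd n. of_nat d powi (- K) *
      (\<Sum>i\<in>I. c ^ e i * ((of_nat d ^ 2 / of_nat n) ^ e i * of_nat d * E i d)))"
    unfolding hecke_def c_def E_def by (intro arg_cong2[where f = "(*)"] refl sum.cong)
      (simp_all add: hecke_inner_sum[OF P n _ z])
  also have "\<dots> = (\<Sum>d | d dvd n. \<Sum>i\<in>I. c ^ e i * (hecke_weight K n (e i) d * E i d))"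
    by (simp add: hecke_weight_def sum_distrib_left mult_ac)
  also have "\<dots> = (\<Sum>i\<in>I. c ^ e i * (\<Sum>d | d dvd n. hecke_weight K n (e i) d * E i d))"
    by (subst sum.swap) (simp add: sum_distrib_left)
  also have "\<dots> = (\<Sum>i\<in>I. c ^ e i * eval_fps (hecke_fps K n (e i) (S i)) (qparam z))"
    using eval_hecke_fps[OF n nh_expansionD(2)[OF P] z] by (simp add: E_def)
  finally show "hecke K n P z = (\<Sum>i\<in>I. complex_of_real (1 / Im z) ^ e i *
      eval_fps (hecke_fps K n (e i) (S i)) (qparam z))"
    by (simp add: c_def)
qed

text \<open>Uniqueness of expansions: if \<open>sum_j y^(-j) V_j(q)\<close> vanishes on the upper half plane then
  every \<open>V_j\<close> is zero.  For fixed \<open>y\<close> the sum is a power series vanishing on a circle,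
  hence zero; each coefficient is then a polynomial in \<open>1/y\<close> with infinitely many roots.\<close>

lemma fps_zero_if_vanishes_on_circle:
  assumes W: "1 \<le> fps_conv_radius (W :: complex fps)" and \<rho>: "0 < \<rho>" "\<rho> < 1"
    and vanish: "\<And>q. norm q = \<rho> \<Longrightarrow> eval_fps W q = 0"
  shows "W = 0"
proof -
  have disc: "ball 0 1 \<subseteq> eball 0 (fps_conv_radius W)"
    using eball_mono[OF W, of 0] eball_ereal[of 0 1] by (simp add: one_ereal_def)
  have limpt: "complex_of_real \<rho> islimpt sphere 0 \<rho>"
  proof (rule connected_imp_perfect)
    show "connected (sphere (0::complex) \<rho>)" by (rule connected_sphere) simp
    show "complex_of_real \<rho> \<in> sphere 0 \<rho>" using \<rho> by simp
    show "sphere 0 \<rho> \<noteq> {x}" for x :: complex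
    proof
      assume "sphere 0 \<rho> = {x}"
      moreover have "complex_of_real \<rho> \<in> sphere 0 \<rho>" "- complex_of_real \<rho> \<in> sphere 0 \<rho>"
        using \<rho> by auto
      ultimately show False using \<rho> by auto
    qed
  qed
  have "eval_fps W w = 0" if w: "w \<in> ball 0 1" for w
  proof (rule analytic_continuation[OF holomorphic_on_eval_fps[OF disc] open_ball connected_ball _ _ limpt])
    show "sphere 0 \<rho> \<subseteq> ball 0 1" "complex_of_real \<rho> \<in> ball 0 1" using \<rho> by auto
    show "eval_fps W q = 0" if "q \<in> sphere 0 \<rho>" for q using vanish that by simp
  qed (rule w)
  hence "\<forall>\<^sub>F w in nhds 0. eval_fps W w = eval_fps 0 w"
    using eventually_nhds_in_open[of "ball 0 1" 0] by (auto elim!: eventually_mono)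
  moreover have "0 < fps_conv_radius W" using W by (rule less_le_trans[rotated]) simp
  ultimately show "W = 0" by (intro eval_fps_eqD) auto
qed

lemma polynomial_vanishing_on_positive_reals:
  fixes v :: "nat \<Rightarrow> complex"
  assumes J: "finite J" and vanish: "\<And>t::real. t > 0 \<Longrightarrow> (\<Sum>j\<in>J. v j * complex_of_real t ^ j) = 0"
    and j: "j \<in> J"
  shows "v j = 0"
proof -
  define p where "p = (\<Sum>j\<in>J. monom (v j) j)"
  have roots: "complex_of_real ` {0<..} \<subseteq> {x. poly p x = 0}"
    using vanish by (auto simp: p_def poly_sum poly_monom)
  have "infinite (complex_of_real ` {0<..})"
    by (subst finite_image_iff) (auto simp: inj_on_def infinite_Ioi)
  hence "p = 0" using poly_roots_finite[of p] finite_subset[OF roots] by blast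
  hence "coeff p j = 0" by simp
  thus "v j = 0" using J j by (simp add: p_def coeff_sum coeff_monom)
qed

lemma nh_expansion_of_zero:
  assumes F: "nh_expansion J id V F" and zero: "\<And>z. z \<in> upper_half \<Longrightarrow> F z = 0" and j: "j \<in> J"
  shows "V j = 0"
proof (rule fps_ext)
  fix m
  note J = nh_expansionD(1)[OF F] and V = nh_expansionD(2)[OF F]
  have "(\<Sum>j\<in>J. fps_nth (V j) m * complex_of_real t ^ j) = 0" if t: "t > 0" for t :: real
  proof -
    define W where "W = (\<Sum>j\<in>J. fps_const (complex_of_real t ^ j) * V j)"
    have W_radius: "1 \<le> fps_conv_radius W"
      unfolding W_def using V by (intro unit_radius_sum unit_radius_mult) auto
    have "W = 0"
    proof (rule fps_zero_if_vanishes_on_circle[OF W_radius])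
      show "0 < exp (- 2 * pi / t)" "exp (- 2 * pi / t) < 1" using t by auto
      fix q :: complex assume q: "norm q = exp (- 2 * pi / t)"
      define z where "z = Ln q / (2 * complex_of_real pi * \<i>)"
      have "q \<noteq> 0" using q by auto
      hence qz: "qparam z = q" and Im_z: "Im z = 1 / t"
        using qparam_surj[of q] q by (simp_all add: z_def)
      have zH: "z \<in> upper_half" using t Im_z by (simp add: upper_half_def)
      have "eval_fps W q = (\<Sum>j\<in>J. complex_of_real t ^ j * eval_fps (V j) q)"
        unfolding W_def using V qparam_in_disc[OF zH] qz
        by (subst eval_fps_sum) (auto intro!: unit_radius_mult sum.cong eval_fps_cmult)
      also have "\<dots> = F z"
        using nh_expansionD(3)[OF F zH] by (simp add: qz Im_z)
      finally show "eval_fps W q = 0" using zero[OF zH] by simp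
    qed
    hence "fps_nth W m = 0" by simp
    thus ?thesis by (simp add: W_def fps_sum_nth mult.commute)
  qed
  thus "fps_nth (V j) m = fps_nth 0 m"
    using polynomial_vanishing_on_positive_reals[OF J _ j, of "\<lambda>j. fps_nth (V j) m"] by simp
qed

lemma nh_expansion_of_zero_grouped:
  assumes F: "nh_expansion I e S F" and zero: "\<And>z. z \<in> upper_half \<Longrightarrow> F z = 0"
  shows "(\<Sum>i\<in>{i\<in>I. e i = j}. S i) = 0"
proof (cases "j \<in> e ` I")
  case True
  from nh_expansion_of_zero[OF nh_expansion_group[OF F] zero True] show ?thesis .
next
  case False
  hence "{i\<in>I. e i = j} = {}" by auto
  thus ?thesis by (simp only: sum.empty)
qed

text \<open>If \<open>T_n P = lambda P\<close>, compare coefficients of \<open>q^1\<close>: on the left they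
  are \<open>n^j\<close> times the \<open>n\<close>-th coefficients of \<open>P\<close>, on the right they vanish.  So all
  coefficients of \<open>P\<close> vanish and \<open>P = 0\<close>, which an eigenform is not.\<close>

lemma hecke_eigen_coefficients:
  assumes P: "nh_expansion I e S P" and n: "n \<ge> 1"
    and eigen: "\<And>z. z \<in> upper_half \<Longrightarrow> hecke K n P z = ev * P z"
    and S1: "\<And>i. i \<in> I \<Longrightarrow> fps_nth (S i) 1 = 0"
  shows "(\<Sum>i\<in>{i\<in>I. e i = j}. fps_nth (S i) n) = 0"
proof -
  let ?T = "\<lambda>i. hecke_fps K n (e i) (S i) - fps_const ev * S i"
  have "nh_expansion I e ?T (\<lambda>z. hecke K n P z - ev * P z)"
    by (rule nh_expansion_diff[OF hecke_nh_expansion[OF P n] P])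
  hence "(\<Sum>i\<in>{i\<in>I. e i = j}. ?T i) = 0"
    by (rule nh_expansion_of_zero_grouped) (simp add: eigen)
  hence "fps_nth (\<Sum>i\<in>{i\<in>I. e i = j}. ?T i) 1 = 0" by simp
  also have "fps_nth (\<Sum>i\<in>{i\<in>I. e i = j}. ?T i) 1 = of_nat n ^ j * (\<Sum>i\<in>{i\<in>I. e i = j}. fps_nth (S i) n)"
  proof -
    have "fps_nth (?T i) 1 = of_nat n ^ e i * fps_nth (S i) n" if "i \<in> I" for i
      using hecke_fps_nth_1[OF n, of K "e i" "S i"] S1[OF that] by simp
    thus ?thesis unfolding fps_sum_nth sum_distrib_left by (intro sum.cong refl) auto
  qed
  finally show ?thesis using n by simp
qed

lemma nh_expansion_order_2_not_eigenform:
  assumes P: "nh_expansion I e S P"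
    and S0: "\<And>i. i \<in> I \<Longrightarrow> fps_nth (S i) 0 = 0" and S1: "\<And>i. i \<in> I \<Longrightarrow> fps_nth (S i) 1 = 0"
  shows "\<not> eigenform K P"
proof
  assume "eigenform K P"
  then obtain z0 where z0: "z0 \<in> upper_half" "P z0 \<noteq> 0"
    and eigen: "\<And>n. n \<ge> 1 \<Longrightarrow> \<exists>ev. \<forall>z\<in>upper_half. hecke K n P z = ev * P z"
    unfolding eigenform_def by blast
  have group_zero: "(\<Sum>i\<in>{i\<in>I. e i = j}. S i) = 0" for j
  proof (rule fps_ext)
    fix n
    show "fps_nth (\<Sum>i\<in>{i\<in>I. e i = j}. S i) n = fps_nth 0 n"
    proof (cases "n = 0")
      case True thus ?thesis by (simp add: fps_sum_nth S0)
    next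
      case False
      then obtain ev where "\<And>z. z \<in> upper_half \<Longrightarrow> hecke K n P z = ev * P z"
        using eigen[of n] by auto
      from hecke_eigen_coefficients[OF P _ this S1] False show ?thesis by (simp add: fps_sum_nth)
    qed
  qed
  have "P z0 = (\<Sum>j\<in>e ` I. complex_of_real (1 / Im z0) ^ id j *
      eval_fps (\<Sum>i\<in>{i\<in>I. e i = j}. S i) (qparam z0))"
    by (rule nh_expansionD(3)[OF nh_expansion_group[OF P] z0(1)])
  also have "\<dots> = 0" by (simp add: group_zero)
  finally show False using z0(2) by simp
qed

text \<open>The theorem: \<open>delta^(r) f\<close> and \<open>delta^(s) g\<close> come from cusp forms, so their product vanishes
  to order 2 at the cusp and cannot be a Hecke eigenform.\<close>

theorem mainTheorem9:
  fixes f g :: "complex \<Rightarrow> complex" and k l :: int and r s :: nat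
  assumes "even k" and "even l"
    and "cusp_form k f" and "cusp_form l g"
    and "\<exists>z\<in>upper_half. f z \<noteq> 0" and "\<exists>z\<in>upper_half. g z \<noteq> 0"
    and "eigenform (k + 2 * int r) (maass_shimura_iter k r f)"
    and "eigenform (l + 2 * int s) (maass_shimura_iter l s g)"
  shows "\<not> eigenform (k + l + 2 * int r + 2 * int s)
           (\<lambda>z. maass_shimura_iter k r f z * maass_shimura_iter l s g z)"
proof -
  have factors: "nearly_cuspidal (maass_shimura_iter k r f)" "nearly_cuspidal (maass_shimura_iter l s g)"
    using cusp_form_nearly_cuspidal[OF assms(3)] cusp_form_nearly_cuspidal[OF assms(4)]
    by (simp_all add: maass_shimura_iter_nearly_cuspidal)
  obtain I :: "(nat \<times> nat) set" and e S
    where "nh_expansion I e S (\<lambda>z. maass_shimura_iter k r f z * maass_shimura_iter l s g z)"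
      and "\<And>i. i \<in> I \<Longrightarrow> fps_nth (S i) 0 = 0" and "\<And>i. i \<in> I \<Longrightarrow> fps_nth (S i) 1 = 0"
    using nearly_cuspidal_product[OF factors] by blast
  thus ?thesis by (rule nh_expansion_order_2_not_eigenform)
qed

end
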